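(* Let $q$ be an odd prime power and let $B(q)$ be the Brown graph. Let $c$ be a quadric vertex of $B(q)$ and let $a,b$ be two distinct neighbors of $c$ in $B(q)$. Let $A=N_{B(q)}(a)\setminus N_{B(q)}(b)$ and $B=N_{B(q)}(b)\setminus N_{B(q)}(a)$, and let $M$ be the set of edges of $B(q)$ with one endpoint in $A$ and the other in $B$. Let $H$ be the graph obtained from $B(q)$ by deleting the vertex $c$ and all edges of $M$. Then $H$ is $(q-6)$-vertex-connected.
   Context: Let $\mathbb{F}_q$ be the field with $q$ elements. The Brown graph $B(q)$ has as vertices the one-dimensional subspaces of $\mathbb{F}_q^3$, i.e. the equivalence classes $[x]$ of nonzero vectors $x\in\mathbb{F}_q^3$ under $x\sim \alpha x$ for $\alpha\in\mathbb{F}_q\setminus\{0\}$; two distinct vertices $[x]$ and $[y]$ are adjacent if and only if $xy^T=0$. A vertex $[x]$ is called quadric if $xx^T=0$. $N_{B(q)}(v)$ denotes the set of neighbors of $v$ in $B(q)$. A graph is $k$-vertex-connected if between any two distinct vertices there are at least $k$ internally vertex-disjoint paths. *)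

theory Defs
  imports Main "HOL-Library.Cardinality"
begin

type_synonym 'a vec3 = "'a \<times> 'a \<times> 'a"

definition dot3 :: "'a::comm_ring_1 vec3 \<Rightarrow> 'a vec3 \<Rightarrow> 'a" where
  "dot3 x y = fst x * fst y + fst (snd x) * fst (snd y) + snd (snd x) * snd (snd y)"

definition scale3 :: "'a::comm_ring_1 \<Rightarrow> 'a vec3 \<Rightarrow> 'a vec3" where
  "scale3 c x = (c * fst x, c * fst (snd x), c * snd (snd x))"

definition proj_pt :: "'a::field vec3 \<Rightarrow> 'a vec3 set" where
  "proj_pt x = {scale3 c x | c. c \<noteq> 0}"

definition brown_vertices :: "'a::{finite,field} vec3 set set" where
  "brown_vertices = {proj_pt x | x. x \<noteq> (0, 0, 0)}"

text \<open>Adjacency in B(q): distinct classes with x y^T = 0 (independent of representatives).\<close>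
definition brown_adj :: "'a::{finite,field} vec3 set \<Rightarrow> 'a vec3 set \<Rightarrow> bool" where
  "brown_adj u v \<longleftrightarrow> u \<in> brown_vertices \<and> v \<in> brown_vertices \<and> u \<noteq> v \<and>
     (\<exists>x\<in>u. \<exists>y\<in>v. dot3 x y = 0)"

definition quadric :: "'a::{finite,field} vec3 set \<Rightarrow> bool" where
  "quadric u \<longleftrightarrow> (\<exists>x\<in>u. dot3 x x = 0)"

definition brown_nbhd :: "'a::{finite,field} vec3 set \<Rightarrow> 'a vec3 set set" where
  "brown_nbhd u = {v. brown_adj u v}"

definition is_path :: "'v set \<Rightarrow> ('v \<Rightarrow> 'v \<Rightarrow> bool) \<Rightarrow> 'v list \<Rightarrow> 'v \<Rightarrow> 'v \<Rightarrow> bool" where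
  "is_path S E p u v \<longleftrightarrow> p \<noteq> [] \<and> hd p = u \<and> last p = v \<and> distinct p \<and> set p \<subseteq> S \<and>
     (\<forall>i. Suc i < length p \<longrightarrow> E (p ! i) (p ! Suc i))"

definition inner_vertices :: "'v list \<Rightarrow> 'v set" where
  "inner_vertices p = set (butlast (tl p))"

definition k_vertex_connected :: "'v set \<Rightarrow> ('v \<Rightarrow> 'v \<Rightarrow> bool) \<Rightarrow> nat \<Rightarrow> bool" where
  "k_vertex_connected S E k \<longleftrightarrow>
     (\<forall>u\<in>S. \<forall>v\<in>S. u \<noteq> v \<longrightarrow>
        (\<exists>P. finite P \<and> k \<le> card P \<and> (\<forall>p\<in>P. is_path S E p u v) \<and>
             (\<forall>p\<in>P. \<forall>p'\<in>P. p \<noteq> p' \<longrightarrow> inner_vertices p \<inter> inner_vertices p' = {})))"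

end

theory Submission
  imports Defs
begin

text \<open>Write c = [c0], a = [a0], b = [b0] and let u, v be distinct vertices other than c.
  Pick an affine point p = [(1, x, y)] different from u and v and orthogonal to none of u, v, c;
  counting shows that one exists once q \<ge> 4. For every point s of the polar line of p the
  walk u, s \<times> u, s, s \<times> v, v (shortened to u, s \<times> u, v when s \<times> u and s \<times> v coincide)
  lies in B(q). Two distinct points of that line span the plane orthogonal to p, so a vector
  orthogonal to both is a multiple of p: hence the walks for distinct s share no inner vertex.
  The walk is a path of H as soon as s is orthogonal to none of seven vectors determined by
  u, v, a, b, c, and each of them rules out at most one of the q + 1 points of the line,
  leaving q - 6 paths.\<close>

definition cross3 :: "'a::comm_ring_1 vec3 \<Rightarrow> 'a vec3 \<Rightarrow> 'a vec3" where
  "cross3 x y = (fst (snd x) * snd (snd y) - snd (snd x) * fst (snd y),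
                 snd (snd x) * fst y - fst x * snd (snd y),
                 fst x * fst (snd y) - fst (snd x) * fst y)"

lemma dot3_commute: "dot3 x y = dot3 y x"
  by (simp add: dot3_def mult.commute)

lemma dot3_scale3_left: "dot3 (scale3 k x) y = k * dot3 x y"
  by (simp add: dot3_def scale3_def algebra_simps)

lemma dot3_scale3_right: "dot3 x (scale3 k y) = k * dot3 x y"
  by (simp add: dot3_def scale3_def algebra_simps)

lemma scale3_scale3: "scale3 c (scale3 k x) = scale3 (c * k) x"
  by (simp add: scale3_def mult.assoc)

lemma scale3_eq_zero_iff:
  fixes x :: "'a::field vec3"
  shows "scale3 k x = (0, 0, 0) \<longleftrightarrow> k = 0 \<or> x = (0, 0, 0)"
  by (cases x) (auto simp: scale3_def)

lemma cross3_orthogonal_left: "dot3 (cross3 x y) x = 0"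
  by (simp add: dot3_def cross3_def algebra_simps)

lemma cross3_orthogonal_right: "dot3 (cross3 x y) y = 0"
  by (simp add: dot3_def cross3_def algebra_simps)

lemma dot3_cross3_assoc: "dot3 (cross3 x y) z = dot3 x (cross3 y z)"
  by (simp add: dot3_def cross3_def algebra_simps)

lemma dot3_cross3_cross3:
  "dot3 (cross3 x y) (cross3 x y) = dot3 x x * dot3 y y - (dot3 x y)\<^sup>2"
  by (simp add: dot3_def cross3_def algebra_simps power2_eq_square)

lemma cross3_cross3:
  "cross3 (cross3 x y) z =
     (dot3 x z * fst y - dot3 y z * fst x,
      dot3 x z * fst (snd y) - dot3 y z * fst (snd x),
      dot3 x z * snd (snd y) - dot3 y z * snd (snd x))"
  by (simp add: dot3_def cross3_def algebra_simps)

lemma cross3_scale3_self: "cross3 y (scale3 k y) = (0, 0, 0)"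
  by (simp add: cross3_def scale3_def algebra_simps)

lemma cross3_eq_zero_imp_parallel:
  fixes y z :: "'a::field vec3"
  assumes "cross3 y z = (0, 0, 0)" and "y \<noteq> (0, 0, 0)"
  shows "\<exists>k. z = scale3 k y"
proof -
  obtain y1 y2 y3 where y: "y = (y1, y2, y3)" by (cases y) auto
  obtain z1 z2 z3 where z: "z = (z1, z2, z3)" by (cases z) auto
  have e: "y2 * z3 = y3 * z2" "y3 * z1 = y1 * z3" "y1 * z2 = y2 * z1"
    using assms(1) by (auto simp: y z cross3_def)
  consider "y1 \<noteq> 0" | "y1 = 0" "y2 \<noteq> 0" | "y1 = 0" "y2 = 0" "y3 \<noteq> 0"
    using assms(2) y by auto
  then show ?thesis
  proof cases
    case 1
    then show ?thesis using e by (intro exI[of _ "z1 / y1"]) (auto simp: y z scale3_def field_simps)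
  next
    case 2
    then show ?thesis using e by (intro exI[of _ "z2 / y2"]) (auto simp: y z scale3_def field_simps)
  next
    case 3
    then show ?thesis using e by (intro exI[of _ "z3 / y3"]) (auto simp: y z scale3_def field_simps)
  qed
qed

lemma orthogonal_both_imp_parallel_cross3:
  fixes x y z :: "'a::field vec3"
  assumes "dot3 x z = 0" and "dot3 y z = 0" and "cross3 x y \<noteq> (0, 0, 0)"
  shows "\<exists>k. z = scale3 k (cross3 x y)"
  using cross3_eq_zero_imp_parallel[OF _ assms(3)] assms(1,2) by (simp add: cross3_cross3)

lemma proj_pt_self: "x \<in> proj_pt x"
  unfolding proj_pt_def by (rule CollectI, rule exI[of _ 1]) (simp add: scale3_def)

lemma proj_pt_scale3:
  assumes "k \<noteq> 0"
  shows "proj_pt (scale3 k x) = proj_pt x"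
proof
  show "proj_pt (scale3 k x) \<subseteq> proj_pt x"
    using assms by (auto simp: proj_pt_def scale3_scale3)
  show "proj_pt x \<subseteq> proj_pt (scale3 k x)"
  proof
    fix z assume "z \<in> proj_pt x"
    then obtain c where c: "c \<noteq> 0" "z = scale3 c x" by (auto simp: proj_pt_def)
    then have "z = scale3 (c / k) (scale3 k x)" using assms by (simp add: scale3_scale3)
    then show "z \<in> proj_pt (scale3 k x)" using c assms by (auto simp: proj_pt_def)
  qed
qed

lemma proj_pt_eqD: "proj_pt y = proj_pt z \<Longrightarrow> \<exists>k. k \<noteq> 0 \<and> z = scale3 k y"
  using proj_pt_self[of z] by (auto simp: proj_pt_def)

lemma proj_pt_eq_iff_cross3:
  fixes y z :: "'a::field vec3"
  assumes "y \<noteq> (0, 0, 0)" and "z \<noteq> (0, 0, 0)"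
  shows "proj_pt y = proj_pt z \<longleftrightarrow> cross3 y z = (0, 0, 0)"
proof
  assume "proj_pt y = proj_pt z"
  then show "cross3 y z = (0, 0, 0)" by (auto dest: proj_pt_eqD simp: cross3_scale3_self)
next
  assume "cross3 y z = (0, 0, 0)"
  then obtain k where k: "z = scale3 k y" using cross3_eq_zero_imp_parallel assms(1) by blast
  with assms(2) have "k \<noteq> 0" by (auto simp: scale3_eq_zero_iff)
  with k show "proj_pt y = proj_pt z" by (simp add: proj_pt_scale3)
qed

lemma dot3_eq_zero_if_proj_pt_eq: "proj_pt y = proj_pt z \<Longrightarrow> dot3 y w = 0 \<Longrightarrow> dot3 z w = 0"
  by (auto dest!: proj_pt_eqD simp: dot3_scale3_left)

lemma proj_pt_neq_if_dot3: "dot3 y w = 0 \<Longrightarrow> dot3 z w \<noteq> 0 \<Longrightarrow> proj_pt y \<noteq> proj_pt z"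
  using dot3_eq_zero_if_proj_pt_eq by blast

lemma proj_pt_cross3_neq_left: "dot3 w s \<noteq> 0 \<Longrightarrow> proj_pt (cross3 s x) \<noteq> proj_pt w"
  by (rule proj_pt_neq_if_dot3[OF cross3_orthogonal_left])

lemma proj_pt_cross3_neq_right: "dot3 w x \<noteq> 0 \<Longrightarrow> proj_pt (cross3 s x) \<noteq> proj_pt w"
  by (rule proj_pt_neq_if_dot3[OF cross3_orthogonal_right])

lemma proj_pt_in_brown_vertices: "x \<noteq> (0, 0, 0) \<Longrightarrow> proj_pt x \<in> brown_vertices"
  unfolding brown_vertices_def by blast

lemma brown_verticesE:
  assumes "w \<in> brown_vertices"
  obtains x where "x \<noteq> (0, 0, 0)" and "w = proj_pt x"
  using assms by (auto simp: brown_vertices_def)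

lemma brown_adj_commute: "brown_adj u v \<longleftrightarrow> brown_adj v u"
  unfolding brown_adj_def by (metis dot3_commute)

lemma brown_adj_proj_pt_iff:
  fixes x y :: "'a::{finite,field} vec3"
  assumes "x \<noteq> (0, 0, 0)" and "y \<noteq> (0, 0, 0)"
  shows "brown_adj (proj_pt x) (proj_pt y) \<longleftrightarrow> proj_pt x \<noteq> proj_pt y \<and> dot3 x y = 0"
proof
  assume adj: "brown_adj (proj_pt x) (proj_pt y)"
  then obtain x' y' where "x' \<in> proj_pt x" "y' \<in> proj_pt y" "dot3 x' y' = 0"
    unfolding brown_adj_def by blast
  then obtain k m where "k \<noteq> 0" "m \<noteq> 0" "k * (m * dot3 x y) = 0"
    by (auto simp: proj_pt_def dot3_scale3_left dot3_scale3_right)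
  with adj show "proj_pt x \<noteq> proj_pt y \<and> dot3 x y = 0" by (auto simp: brown_adj_def)
next
  assume "proj_pt x \<noteq> proj_pt y \<and> dot3 x y = 0"
  then show "brown_adj (proj_pt x) (proj_pt y)"
    using assms proj_pt_self[of x] proj_pt_self[of y] proj_pt_in_brown_vertices
    unfolding brown_adj_def by blast
qed

lemma quadric_proj_pt_iff: "quadric (proj_pt x) \<longleftrightarrow> dot3 x x = 0"
proof
  assume "quadric (proj_pt x)"
  then obtain z where "z \<in> proj_pt x" "dot3 z z = 0" unfolding quadric_def by blast
  then obtain k where "k \<noteq> 0" "dot3 (scale3 k x) (scale3 k x) = 0"
    unfolding proj_pt_def by blast
  then show "dot3 x x = 0" by (simp add: dot3_scale3_left dot3_scale3_right)
next
  assume "dot3 x x = 0"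
  then show "quadric (proj_pt x)" using proj_pt_self[of x] unfolding quadric_def by blast
qed

lemma isotropic_orthogonal_proj_pt_eq:
  fixes y z :: "'a::field vec3"
  assumes "y \<noteq> (0, 0, 0)" "z \<noteq> (0, 0, 0)"
    and "dot3 y y = 0" "dot3 y z = 0" "dot3 z z = 0"
  shows "proj_pt y = proj_pt z"
proof (rule ccontr)
  assume "proj_pt y \<noteq> proj_pt z"
  then have cross: "cross3 y z \<noteq> (0, 0, 0)" using proj_pt_eq_iff_cross3 assms(1,2) by blast
  then obtain k m where "y = scale3 k (cross3 y z)" "z = scale3 m (cross3 y z)"
    using orthogonal_both_imp_parallel_cross3[OF _ _ cross] assms(3-5) dot3_commute by metis
  then have "cross3 y z = cross3 (scale3 k (cross3 y z)) (scale3 m (cross3 y z))" by simp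
  also have "\<dots> = (0, 0, 0)" by (simp add: cross3_def scale3_def algebra_simps)
  finally show False using cross by blast
qed

lemma isotropic_neighbours_not_orthogonal:
  fixes a b c :: "'a::field vec3"
  assumes nonzero: "a \<noteq> (0, 0, 0)" "b \<noteq> (0, 0, 0)" "c \<noteq> (0, 0, 0)"
    and "dot3 c c = 0" "dot3 c a = 0" "dot3 c b = 0"
    and "proj_pt a \<noteq> proj_pt b" "proj_pt a \<noteq> proj_pt c" "proj_pt b \<noteq> proj_pt c"
  shows "dot3 a b \<noteq> 0"
proof
  assume ab: "dot3 a b = 0"
  have "cross3 a b \<noteq> (0, 0, 0)" using proj_pt_eq_iff_cross3 assms(1,2,7) by blast
  then obtain k where k: "c = scale3 k (cross3 a b)"
    using orthogonal_both_imp_parallel_cross3 assms(5,6) dot3_commute by metis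
  with nonzero(3) have "k \<noteq> 0" by (auto simp: scale3_eq_zero_iff)
  have "dot3 c c = k * (k * (dot3 a a * dot3 b b))"
    using k ab by (simp add: dot3_scale3_left dot3_scale3_right dot3_cross3_cross3)
  with \<open>dot3 c c = 0\<close> \<open>k \<noteq> 0\<close> have "dot3 a a = 0 \<or> dot3 b b = 0" by simp
  then show False
    using isotropic_orthogonal_proj_pt_eq[OF nonzero(1,3)] isotropic_orthogonal_proj_pt_eq[OF nonzero(2,3)]
      assms(4-9) by (auto simp: dot3_commute)
qed

lemma orthogonal_to_two_points_parallel:
  fixes s s' z p :: "'a::field vec3"
  assumes "s \<noteq> (0, 0, 0)" "s' \<noteq> (0, 0, 0)" "proj_pt s \<noteq> proj_pt s'"
    and "dot3 z s = 0" "dot3 z s' = 0" "dot3 p s = 0" "dot3 p s' = 0" "p \<noteq> (0, 0, 0)"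
  shows "\<exists>m. z = scale3 m p"
proof -
  have cross: "cross3 s s' \<noteq> (0, 0, 0)" using proj_pt_eq_iff_cross3 assms(1-3) by blast
  obtain k m where km: "z = scale3 k (cross3 s s')" "p = scale3 m (cross3 s s')"
    using orthogonal_both_imp_parallel_cross3[OF _ _ cross] assms(4-7) dot3_commute by metis
  with assms(8) have "m \<noteq> 0" by (auto simp: scale3_eq_zero_iff)
  with km have "z = scale3 (k / m) p" by (simp add: scale3_scale3)
  then show ?thesis ..
qed

lemma cross3_not_parallel:
  fixes y z p :: "'a::field vec3"
  assumes "y \<noteq> (0, 0, 0)" "z \<noteq> (0, 0, 0)" "proj_pt y \<noteq> proj_pt z" "dot3 p y \<noteq> 0"
  shows "cross3 y z \<noteq> scale3 m p"
proof
  assume eq: "cross3 y z = scale3 m p"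
  then have "m * dot3 p y = 0" using cross3_orthogonal_left[of y z] by (simp add: dot3_scale3_left)
  with assms(4) eq have "cross3 y z = (0, 0, 0)" by (simp add: scale3_def)
  then show False using proj_pt_eq_iff_cross3 assms(1-3) by blast
qed

lemma cross3_nonzero_if_orthogonal:
  fixes s x p :: "'a::field vec3"
  assumes "s \<noteq> (0, 0, 0)" "dot3 p s = 0" "dot3 p x \<noteq> 0"
  shows "cross3 s x \<noteq> (0, 0, 0)"
proof
  assume "cross3 s x = (0, 0, 0)"
  then obtain k where "x = scale3 k s" using cross3_eq_zero_imp_parallel assms(1) by blast
  with assms(2,3) show False by (simp add: dot3_scale3_right)
qed

lemma proj_pt_cross3_neq_cross3:
  fixes s s' p x y :: "'a::field vec3"
  assumes "s \<noteq> (0, 0, 0)" "s' \<noteq> (0, 0, 0)" "proj_pt s \<noteq> proj_pt s'"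
    and "dot3 p s = 0" "dot3 p s' = 0" "p \<noteq> (0, 0, 0)" "dot3 p y \<noteq> 0"
  shows "proj_pt (cross3 s x) \<noteq> proj_pt (cross3 s' y)"
proof
  assume "proj_pt (cross3 s x) = proj_pt (cross3 s' y)"
  then have "dot3 (cross3 s' y) s = 0"
    using dot3_eq_zero_if_proj_pt_eq cross3_orthogonal_left by blast
  then obtain m where m: "cross3 s' y = scale3 m p"
    using orthogonal_to_two_points_parallel[OF assms(1-3) _ _ assms(4-6)]
      cross3_orthogonal_left[of s' y] by metis
  then have "m * dot3 p y = 0" using cross3_orthogonal_right[of s' y] by (simp add: dot3_scale3_left)
  with assms(7) m have "cross3 s' y = (0, 0, 0)" by (simp add: scale3_def)
  with cross3_nonzero_if_orthogonal[OF assms(2,5,7)] show False ..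
qed

lemma card_affine_orthogonal_le:
  fixes w :: "'a::{finite,field} vec3"
  assumes "w \<noteq> (0, 0, 0)"
  shows "card {(x, y). dot3 (1, x, y) w = 0} \<le> CARD('a)"
proof -
  obtain a b c where w: "w = (a, b, c)" by (cases w) auto
  let ?L = "{(x, y). dot3 (1, x, y) w = 0}"
  have "\<exists>f :: 'a \<Rightarrow> 'a \<times> 'a. ?L \<subseteq> range f"
  proof (cases "c = 0")
    case False
    have "?L \<subseteq> range (\<lambda>x. (x, - (a + x * b) / c))"
    proof
      fix z assume "z \<in> ?L"
      then obtain x y where "z = (x, y)" "y = - (a + x * b) / c"
        using False by (auto simp: w dot3_def field_simps add_eq_0_iff)
      then show "z \<in> range (\<lambda>x. (x, - (a + x * b) / c))" by auto
    qed
    then show ?thesis by blast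
  next
    case c: True
    show ?thesis
    proof (cases "b = 0")
      case False
      have "?L \<subseteq> range (\<lambda>y. (- a / b, y))"
      proof
        fix z assume "z \<in> ?L"
        then obtain x y where "z = (x, y)" "x = - a / b"
          using False c by (auto simp: w dot3_def field_simps add_eq_0_iff)
        then show "z \<in> range (\<lambda>y. (- a / b, y))" by auto
      qed
      then show ?thesis by blast
    next
      case True
      with c assms have "?L = {}" by (auto simp: w dot3_def)
      then show ?thesis by blast
    qed
  qed
  then obtain f :: "'a \<Rightarrow> 'a \<times> 'a" where "?L \<subseteq> range f" by blast
  then have "card ?L \<le> card (range f)" by (intro card_mono) auto
  also have "\<dots> \<le> CARD('a)" by (rule card_image_le) simp
  finally show ?thesis .
qed

lemma card_affine_representative_le:
  fixes z :: "'a::{finite,field} vec3"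
  assumes "z \<noteq> (0, 0, 0)"
  shows "card {(x, y). \<exists>m. z = scale3 m (1, x, y)} \<le> 1"
proof -
  have "{(x, y). \<exists>m. z = scale3 m (1, x, y)} \<subseteq> {(fst (snd z) / fst z, snd (snd z) / fst z)}"
  proof
    fix t assume "t \<in> {(x, y). \<exists>m. z = scale3 m (1, x, y)}"
    then obtain x y m where t: "t = (x, y)" "z = scale3 m (1, x, y)" by blast
    with assms have "m \<noteq> 0" by (auto simp: scale3_def)
    with t show "t \<in> {(fst (snd z) / fst z, snd (snd z) / fst z)}" by (auto simp: scale3_def)
  qed
  then have "card {(x, y). \<exists>m. z = scale3 m (1, x, y)} \<le> card {(fst (snd z) / fst z, snd (snd z) / fst z)}"
    by (intro card_mono) auto
  then show ?thesis by simp
qed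

lemma exists_affine_point_avoiding:
  fixes W Z :: "'a::{finite,field} vec3 set"
  assumes "(0, 0, 0) \<notin> W" and "(0, 0, 0) \<notin> Z"
    and "card W * CARD('a) + card Z < CARD('a)\<^sup>2"
  shows "\<exists>x y. (\<forall>w\<in>W. dot3 (1, x, y) w \<noteq> 0) \<and> (\<forall>z\<in>Z. \<forall>m. z \<noteq> scale3 m (1, x, y))"
proof (rule ccontr)
  define L where "L w = {(x, y). dot3 (1, x, y) w = (0::'a)}" for w :: "'a vec3"
  define R where "R z = {(x, y). \<exists>m. z = scale3 m (1::'a, x, y)}" for z :: "'a vec3"
  assume "\<not> ?thesis"
  then have "UNIV = (\<Union>w\<in>W. L w) \<union> (\<Union>z\<in>Z. R z)"
    by (fastforce simp: L_def R_def)
  then have "CARD('a \<times> 'a) \<le> card (\<Union>w\<in>W. L w) + card (\<Union>z\<in>Z. R z)"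
    by (metis card_Un_le)
  also have "\<dots> \<le> (\<Sum>w\<in>W. card (L w)) + (\<Sum>z\<in>Z. card (R z))"
    by (intro add_mono card_UN_le) auto
  also have "\<dots> \<le> (\<Sum>w\<in>W. CARD('a)) + (\<Sum>z\<in>Z. 1)"
    using assms(1,2) unfolding L_def R_def
    by (intro add_mono sum_mono card_affine_orthogonal_le card_affine_representative_le) blast+
  finally show False using assms(3) by (simp add: power2_eq_square mult.commute)
qed

text \<open>The q + 1 points of the line orthogonal to (1, x, y), indexed by \<^typ>\<open>'a option\<close>.\<close>
definition polar_line_pt :: "'a::field \<Rightarrow> 'a \<Rightarrow> 'a option \<Rightarrow> 'a vec3" where
  "polar_line_pt x y t = (case t of None \<Rightarrow> (- y, 0, 1) | Some l \<Rightarrow> (- x - l * y, 1, l))"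

lemma polar_line_pt_orthogonal: "dot3 (1, x, y) (polar_line_pt x y t) = 0"
  by (cases t) (auto simp: polar_line_pt_def dot3_def algebra_simps)

lemma polar_line_pt_nonzero: "polar_line_pt x y t \<noteq> (0, 0, 0)"
  by (cases t) (auto simp: polar_line_pt_def)

lemma polar_line_pt_inj:
  "proj_pt (polar_line_pt x y t) = proj_pt (polar_line_pt x y t') \<Longrightarrow> t = t'"
  by (cases t; cases t') (auto dest!: proj_pt_eqD simp: polar_line_pt_def scale3_def)

lemma card_polar_line_orthogonal_le:
  fixes w :: "'a::{finite,field} vec3"
  assumes "\<forall>m. w \<noteq> scale3 m (1, x, y)"
  shows "card {t. dot3 (polar_line_pt x y t) w = 0} \<le> 1"
proof -
  let ?S = "{t. dot3 (polar_line_pt x y t) w = 0}"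
  have "t = t'" if "t \<in> ?S" "t' \<in> ?S" for t t'
  proof (rule ccontr)
    assume "t \<noteq> t'"
    then have "proj_pt (polar_line_pt x y t) \<noteq> proj_pt (polar_line_pt x y t')"
      using polar_line_pt_inj by blast
    then have "\<exists>m. w = scale3 m (1, x, y)"
      by (rule orthogonal_to_two_points_parallel[OF polar_line_pt_nonzero polar_line_pt_nonzero])
        (use that in \<open>simp_all add: dot3_commute[of w] polar_line_pt_orthogonal\<close>)
    with assms show False by blast
  qed
  then show ?thesis using card_le_Suc0_iff_eq[of ?S] by simp
qed

lemma card_polar_line_avoiding:
  fixes W :: "'a::{finite,field} vec3 set"
  assumes "\<forall>w\<in>W. \<forall>m. w \<noteq> scale3 m (1, x, y)"
  shows "Suc CARD('a) - card W \<le> card {t. \<forall>w\<in>W. dot3 (polar_line_pt x y t) w \<noteq> 0}"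
proof -
  let ?bad = "\<Union>w\<in>W. {t. dot3 (polar_line_pt x y t) w = 0}"
  have "card ?bad \<le> (\<Sum>w\<in>W. card {t. dot3 (polar_line_pt x y t) w = 0})"
    by (rule card_UN_le) simp
  also have "\<dots> \<le> (\<Sum>w\<in>W. 1)"
    using assms card_polar_line_orthogonal_le by (intro sum_mono) blast
  finally have "card ?bad \<le> card W" by simp
  moreover have "CARD('a option) - card ?bad \<le> card (UNIV - ?bad)"
    by (rule diff_card_le_card_Diff) simp
  moreover have "UNIV - ?bad = {t. \<forall>w\<in>W. dot3 (polar_line_pt x y t) w \<noteq> 0}" by auto
  ultimately show ?thesis by simp
qed

lemma successively_iff_nth:
  "successively P xs \<longleftrightarrow> (\<forall>i. Suc i < length xs \<longrightarrow> P (xs ! i) (xs ! Suc i))"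
proof (induction P xs rule: successively.induct)
  case (3 P x y xs)
  then show ?case by (auto simp: less_Suc_eq_0_disj)
qed auto

lemma is_path_iff_successively:
  "is_path S E p u v \<longleftrightarrow>
     p \<noteq> [] \<and> hd p = u \<and> last p = v \<and> distinct p \<and> set p \<subseteq> S \<and> successively E p"
  by (simp add: is_path_def successively_iff_nth)

locale quadric_flag =
  fixes c0 a0 b0 :: "'a::{finite,field} vec3"
  assumes c0_nonzero: "c0 \<noteq> (0, 0, 0)" and a0_nonzero: "a0 \<noteq> (0, 0, 0)"
    and b0_nonzero: "b0 \<noteq> (0, 0, 0)"
    and c0_isotropic: "dot3 c0 c0 = 0"
    and c0_a0: "dot3 c0 a0 = 0" and c0_b0: "dot3 c0 b0 = 0"
    and a0_b0: "dot3 a0 b0 \<noteq> 0"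
begin

definition "Aset = brown_nbhd (proj_pt a0) - brown_nbhd (proj_pt b0)"
definition "Bset = brown_nbhd (proj_pt b0) - brown_nbhd (proj_pt a0)"
definition "Mset = {{u, v} | u v. brown_adj u v \<and> u \<in> Aset \<and> v \<in> Bset}"
definition "H_adj u v \<longleftrightarrow> brown_adj u v \<and> {u, v} \<notin> Mset"

text \<open>Since (s \<times> x) \<cdot> b0 = s \<cdot> (x \<times> b0), a point s not orthogonal to
  \<^term>\<open>edge_guard x\<close> cannot put s \<times> x into B when x lies in A (and symmetrically).\<close>
definition "edge_guard x =
  (if proj_pt x \<in> Aset then cross3 x b0 else if proj_pt x \<in> Bset then cross3 x a0 else x)"

lemma Mset_cases: "{y, z} \<in> Mset \<Longrightarrow> y \<in> Aset \<and> z \<in> Bset \<or> y \<in> Bset \<and> z \<in> Aset"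
  unfolding Mset_def by (auto simp: doubleton_eq_iff)

lemma H_adj_commute: "H_adj u v \<longleftrightarrow> H_adj v u"
  by (simp add: H_adj_def brown_adj_commute insert_commute)

lemma Aset_Bset_disjoint: "y \<in> Aset \<Longrightarrow> y \<notin> Bset"
  by (auto simp: Aset_def Bset_def)

lemma dot3_a0_if_in_Aset: "x \<noteq> (0, 0, 0) \<Longrightarrow> proj_pt x \<in> Aset \<Longrightarrow> dot3 a0 x = 0"
  using brown_adj_proj_pt_iff[OF a0_nonzero] by (auto simp: Aset_def brown_nbhd_def)

lemma dot3_b0_if_in_Bset: "x \<noteq> (0, 0, 0) \<Longrightarrow> proj_pt x \<in> Bset \<Longrightarrow> dot3 b0 x = 0"
  using brown_adj_proj_pt_iff[OF b0_nonzero] by (auto simp: Bset_def brown_nbhd_def)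

lemma b0_notin_Aset: "proj_pt b0 \<notin> Aset"
  using dot3_a0_if_in_Aset[OF b0_nonzero] a0_b0 by blast

lemma a0_notin_Bset: "proj_pt a0 \<notin> Bset"
  using dot3_b0_if_in_Bset[OF a0_nonzero] a0_b0 by (auto simp: dot3_commute)

lemma H_adj_proj_ptI:
  assumes "y \<noteq> (0, 0, 0)" "z \<noteq> (0, 0, 0)" "proj_pt y \<noteq> proj_pt z" "dot3 y z = 0"
    and "{proj_pt y, proj_pt z} \<notin> Mset"
  shows "H_adj (proj_pt y) (proj_pt z)"
  using brown_adj_proj_pt_iff[OF assms(1,2)] assms(3-5) by (simp add: H_adj_def)

lemma edge_guard_not_parallel:
  assumes "x \<noteq> (0, 0, 0)" "dot3 p x \<noteq> 0" "\<forall>m. x \<noteq> scale3 m p"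
  shows "edge_guard x \<noteq> scale3 m p"
  using cross3_not_parallel[OF assms(1) b0_nonzero _ assms(2)] b0_notin_Aset
    cross3_not_parallel[OF assms(1) a0_nonzero _ assms(2)] a0_notin_Bset assms(3)
  unfolding edge_guard_def by metis

lemma cross3_edge_not_in_Mset:
  assumes "cross3 s x \<noteq> (0, 0, 0)" "dot3 s (edge_guard x) \<noteq> 0"
  shows "{proj_pt x, proj_pt (cross3 s x)} \<notin> Mset"
proof
  assume "{proj_pt x, proj_pt (cross3 s x)} \<in> Mset"
  then consider "proj_pt x \<in> Aset" "proj_pt (cross3 s x) \<in> Bset"
    | "proj_pt x \<in> Bset" "proj_pt (cross3 s x) \<in> Aset"
    using Mset_cases by blast
  then show False
  proof cases
    case 1
    then have "dot3 (cross3 s x) b0 \<noteq> 0"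
      using assms(2) by (simp add: edge_guard_def dot3_cross3_assoc)
    with dot3_b0_if_in_Bset[OF assms(1) 1(2)] show False by (simp add: dot3_commute)
  next
    case 2
    then have "proj_pt x \<notin> Aset" using Aset_Bset_disjoint by blast
    with 2 have "dot3 (cross3 s x) a0 \<noteq> 0"
      using assms(2) by (simp add: edge_guard_def dot3_cross3_assoc)
    with dot3_a0_if_in_Aset[OF assms(1) 2(2)] show False by (simp add: dot3_commute)
  qed
qed

lemma not_in_Mset_if_not_orthogonal:
  assumes "s \<noteq> (0, 0, 0)" "dot3 s a0 \<noteq> 0" "dot3 s b0 \<noteq> 0"
  shows "{y, proj_pt s} \<notin> Mset"
proof -
  have "proj_pt s \<notin> Aset" "proj_pt s \<notin> Bset"
    using dot3_a0_if_in_Aset[OF assms(1)] dot3_b0_if_in_Bset[OF assms(1)] assms(2,3)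
    by (auto simp: dot3_commute)
  then show ?thesis using Mset_cases by blast
qed

end

locale brown_detour = quadric_flag +
  fixes u0 v0 :: "'a vec3" and px py :: 'a
  assumes u0_nonzero: "u0 \<noteq> (0, 0, 0)" and v0_nonzero: "v0 \<noteq> (0, 0, 0)"
    and u0_v0: "proj_pt u0 \<noteq> proj_pt v0"
    and u0_c0: "proj_pt u0 \<noteq> proj_pt c0" and v0_c0: "proj_pt v0 \<noteq> proj_pt c0"
    and p_u0: "dot3 (1, px, py) u0 \<noteq> 0" and p_v0: "dot3 (1, px, py) v0 \<noteq> 0"
    and p_c0: "dot3 (1, px, py) c0 \<noteq> 0"
    and u0_not_p: "\<forall>m. u0 \<noteq> scale3 m (1, px, py)"
    and v0_not_p: "\<forall>m. v0 \<noteq> scale3 m (1, px, py)"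
begin

abbreviation "p \<equiv> (1, px, py)"

definition "obstacles = {u0, v0, c0, a0, b0, edge_guard u0, edge_guard v0}"

definition "admissible s \<longleftrightarrow> s \<noteq> (0, 0, 0) \<and> dot3 p s = 0 \<and> (\<forall>w\<in>obstacles. dot3 s w \<noteq> 0)"

definition "detour s =
  (if proj_pt (cross3 s u0) = proj_pt (cross3 s v0)
   then [proj_pt u0, proj_pt (cross3 s u0), proj_pt v0]
   else [proj_pt u0, proj_pt (cross3 s u0), proj_pt s, proj_pt (cross3 s v0), proj_pt v0])"

lemma obstacles_not_parallel: "w \<in> obstacles \<Longrightarrow> w \<noteq> scale3 m p"
proof -
  have orthogonal_c0: "w \<noteq> scale3 m p" if "w \<noteq> (0, 0, 0)" "dot3 c0 w = 0" for w
  proof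
    assume "w = scale3 m p"
    with that p_c0 show False by (auto simp: dot3_scale3_right dot3_commute scale3_eq_zero_iff)
  qed
  have "\<forall>w\<in>obstacles. w \<noteq> scale3 m p"
    using orthogonal_c0[OF c0_nonzero c0_isotropic] orthogonal_c0[OF a0_nonzero c0_a0]
      orthogonal_c0[OF b0_nonzero c0_b0] u0_not_p v0_not_p
      edge_guard_not_parallel[OF u0_nonzero p_u0 u0_not_p]
      edge_guard_not_parallel[OF v0_nonzero p_v0 v0_not_p]
    unfolding obstacles_def by simp
  then show "w \<in> obstacles \<Longrightarrow> w \<noteq> scale3 m p" by blast
qed

lemma card_obstacles: "card obstacles \<le> 7"
  using card_length[of "[u0, v0, c0, a0, b0, edge_guard u0, edge_guard v0]"]
  by (simp add: obstacles_def)

lemma admissibleD: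
  assumes "admissible s"
  shows "s \<noteq> (0, 0, 0)" "dot3 p s = 0"
    and "dot3 s u0 \<noteq> 0" "dot3 s v0 \<noteq> 0" "dot3 s c0 \<noteq> 0" "dot3 s a0 \<noteq> 0" "dot3 s b0 \<noteq> 0"
    and "dot3 s (edge_guard u0) \<noteq> 0" "dot3 s (edge_guard v0) \<noteq> 0"
  using assms by (auto simp: admissible_def obstacles_def)

lemma admissible_proj_pt_neq: "admissible s \<Longrightarrow> dot3 p w \<noteq> 0 \<Longrightarrow> proj_pt s \<noteq> proj_pt w"
  using proj_pt_neq_if_dot3[of s p w] admissibleD(2) by (simp add: dot3_commute)

lemma detour_step:
  assumes "admissible s" and "x \<in> {u0, v0}"
  shows "proj_pt (cross3 s x) \<in> brown_vertices - {proj_pt c0}"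
    and "H_adj (proj_pt x) (proj_pt (cross3 s x))"
    and "H_adj (proj_pt (cross3 s x)) (proj_pt s)"
proof -
  note s = admissibleD[OF assms(1)]
  have x: "x \<noteq> (0, 0, 0)" "dot3 p x \<noteq> 0" "dot3 x s \<noteq> 0" "dot3 s (edge_guard x) \<noteq> 0"
    using assms(2) s u0_nonzero v0_nonzero p_u0 p_v0 by (auto simp: dot3_commute)
  have X: "cross3 s x \<noteq> (0, 0, 0)" using cross3_nonzero_if_orthogonal s(1,2) x(2) .
  show "proj_pt (cross3 s x) \<in> brown_vertices - {proj_pt c0}"
    using proj_pt_in_brown_vertices[OF X] proj_pt_cross3_neq_left[of c0 s x] s(5)
    by (simp add: dot3_commute)
  show "H_adj (proj_pt x) (proj_pt (cross3 s x))"
    using H_adj_proj_ptI[OF X x(1) proj_pt_cross3_neq_left[OF x(3)] cross3_orthogonal_right]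
      cross3_edge_not_in_Mset[OF X x(4)] by (simp add: H_adj_commute insert_commute)
  show "H_adj (proj_pt (cross3 s x)) (proj_pt s)"
    using H_adj_proj_ptI[OF X s(1) proj_pt_cross3_neq_right cross3_orthogonal_left]
      not_in_Mset_if_not_orthogonal[OF s(1,6,7)] x(3) by (simp add: dot3_commute)
qed

lemma detour_is_path:
  assumes "admissible s"
  shows "is_path (brown_vertices - {proj_pt c0}) H_adj (detour s) (proj_pt u0) (proj_pt v0)"
proof -
  note s = admissibleD[OF assms]
  define U V S X T where "U = proj_pt u0" "V = proj_pt v0" "S = proj_pt s"
    "X = proj_pt (cross3 s u0)" "T = proj_pt (cross3 s v0)"
  have vertices: "{U, V, S, X, T} \<subseteq> brown_vertices - {proj_pt c0}"
    using proj_pt_in_brown_vertices[OF u0_nonzero] proj_pt_in_brown_vertices[OF v0_nonzero]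
      proj_pt_in_brown_vertices[OF s(1)] u0_c0 v0_c0 admissible_proj_pt_neq[OF assms p_c0]
      detour_step(1)[OF assms] unfolding U_V_S_X_T_def by blast
  have edges: "H_adj U X" "H_adj X S" "H_adj S T" "H_adj T V"
    using detour_step(2,3)[OF assms] H_adj_commute unfolding U_V_S_X_T_def by blast+
  have "X \<noteq> U" "X \<noteq> V" "X \<noteq> S" "T \<noteq> U" "T \<noteq> V" "T \<noteq> S"
    using proj_pt_cross3_neq_left[of u0 s] proj_pt_cross3_neq_left[of v0 s]
      proj_pt_cross3_neq_right[of s u0 s] proj_pt_cross3_neq_right[of s v0 s] s(3,4)
    unfolding U_V_S_X_T_def by (simp_all add: dot3_commute)
  moreover have "S \<noteq> U" "S \<noteq> V" "U \<noteq> V"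
    using admissible_proj_pt_neq[OF assms] p_u0 p_v0 u0_v0 unfolding U_V_S_X_T_def by auto
  ultimately have "distinct [U, X, V]" "X \<noteq> T \<Longrightarrow> distinct [U, X, S, T, V]"
    by auto
  then show ?thesis
    using vertices edges unfolding detour_def is_path_iff_successively U_V_S_X_T_def [symmetric]
    by auto
qed

lemma inner_vertices_detour:
  shows "inner_vertices (detour s) \<subseteq> {proj_pt (cross3 s u0), proj_pt s, proj_pt (cross3 s v0)}"
    and "proj_pt (cross3 s u0) \<in> inner_vertices (detour s)"
  by (auto simp: detour_def inner_vertices_def)

lemma detours_disjoint:
  assumes "admissible s" "admissible s'" "proj_pt s \<noteq> proj_pt s'"
  shows "inner_vertices (detour s) \<inter> inner_vertices (detour s') = {}"
proof -
  note s = admissibleD[OF assms(1)] and s' = admissibleD[OF assms(2)]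
  have cross_cross: "proj_pt (cross3 s x) \<noteq> proj_pt (cross3 s' y)" if "y \<in> {u0, v0}" for x y
    by (intro proj_pt_cross3_neq_cross3[OF s(1) s'(1) assms(3) s(2) s'(2)])
      (use that p_u0 p_v0 in auto)
  have cross_point: "proj_pt (cross3 s x) \<noteq> proj_pt s'" "proj_pt (cross3 s' x) \<noteq> proj_pt s"
    if "dot3 s x \<noteq> 0" "dot3 s' x \<noteq> 0" for x
    using that proj_pt_cross3_neq_right[where w = s' and s = s and x = x]
      proj_pt_cross3_neq_right[where w = s and s = s' and x = x] by auto
  have "{proj_pt (cross3 s u0), proj_pt s, proj_pt (cross3 s v0)} \<inter>
     {proj_pt (cross3 s' u0), proj_pt s', proj_pt (cross3 s' v0)} = {}"
    using cross_cross[of u0 u0] cross_cross[of u0 v0] cross_cross[of v0 u0] cross_cross[of v0 v0]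
      cross_point[OF s(3) s'(3)] cross_point[OF s(4) s'(4)] assms(3) by blast
  then show ?thesis
    using Int_mono[OF inner_vertices_detour(1)[of s] inner_vertices_detour(1)[of s']] by simp
qed

lemma many_disjoint_detours:
  "\<exists>P. finite P \<and> CARD('a) - 6 \<le> card P \<and>
     (\<forall>\<pi>\<in>P. is_path (brown_vertices - {proj_pt c0}) H_adj \<pi> (proj_pt u0) (proj_pt v0)) \<and>
     (\<forall>\<pi>\<in>P. \<forall>\<pi>'\<in>P. \<pi> \<noteq> \<pi>' \<longrightarrow> inner_vertices \<pi> \<inter> inner_vertices \<pi>' = {})"
proof -
  define G where "G = {t. \<forall>w\<in>obstacles. dot3 (polar_line_pt px py t) w \<noteq> 0}"
  define f where "f t = detour (polar_line_pt px py t)" for t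
  have admissible: "admissible (polar_line_pt px py t)" if "t \<in> G" for t
    using that polar_line_pt_nonzero polar_line_pt_orthogonal
    unfolding admissible_def G_def by blast
  have "Suc CARD('a) - card obstacles \<le> card G"
    unfolding G_def by (rule card_polar_line_avoiding) (use obstacles_not_parallel in blast)
  with card_obstacles have card_G: "CARD('a) - 6 \<le> card G" by linarith
  have disjoint: "inner_vertices (f t) \<inter> inner_vertices (f t') = {}"
    if "t \<in> G" "t' \<in> G" "t \<noteq> t'" for t t'
  proof -
    have "proj_pt (polar_line_pt px py t) \<noteq> proj_pt (polar_line_pt px py t')"
      using polar_line_pt_inj that(3) by blast
    then show ?thesis
      using detours_disjoint[OF admissible[OF that(1)] admissible[OF that(2)]] by (simp add: f_def)
  qed
  have inj: "inj_on f G"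
  proof (rule inj_onI, rule ccontr)
    fix t t' assume "t \<in> G" "t' \<in> G" "f t = f t'" "t \<noteq> t'"
    then have "inner_vertices (f t) = {}" using disjoint by fastforce
    then show False using inner_vertices_detour(2)[of "polar_line_pt px py t"] by (simp add: f_def)
  qed
  show ?thesis
  proof (intro exI[of _ "f ` G"] conjI)
    show "finite (f ` G)" by simp
    show "CARD('a) - 6 \<le> card (f ` G)" using card_G card_image[OF inj] by simp
    show "\<forall>\<pi>\<in>f ` G. is_path (brown_vertices - {proj_pt c0}) H_adj \<pi> (proj_pt u0) (proj_pt v0)"
      using detour_is_path[OF admissible] by (simp add: f_def)
    show "\<forall>\<pi>\<in>f ` G. \<forall>\<pi>'\<in>f ` G. \<pi> \<noteq> \<pi>' \<longrightarrow> inner_vertices \<pi> \<inter> inner_vertices \<pi>' = {}"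
      using disjoint by blast
  qed
qed

end

context quadric_flag
begin

theorem k_vertex_connected_H_adj:
  "k_vertex_connected (brown_vertices - {proj_pt c0}) H_adj (nat (int CARD('a) - 6))"
  unfolding k_vertex_connected_def
proof (intro ballI impI)
  fix u v assume u: "u \<in> brown_vertices - {proj_pt c0}" and v: "v \<in> brown_vertices - {proj_pt c0}"
    and "u \<noteq> v"
  show "\<exists>P. finite P \<and> nat (int CARD('a) - 6) \<le> card P \<and>
    (\<forall>\<pi>\<in>P. is_path (brown_vertices - {proj_pt c0}) H_adj \<pi> u v) \<and>
    (\<forall>\<pi>\<in>P. \<forall>\<pi>'\<in>P. \<pi> \<noteq> \<pi>' \<longrightarrow> inner_vertices \<pi> \<inter> inner_vertices \<pi>' = {})"
  proof (cases "7 \<le> CARD('a)")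
    case False
    then show ?thesis by (intro exI[of _ "{}"]) simp
  next
    case True
    obtain u0 v0 where u0: "u0 \<noteq> (0, 0, 0)" "u = proj_pt u0" and v0: "v0 \<noteq> (0, 0, 0)" "v = proj_pt v0"
      using u v by (metis DiffD1 brown_verticesE)
    have nonzero: "(0, 0, 0) \<notin> {u0, v0, c0}" "(0, 0, 0) \<notin> {u0, v0}"
      using u0(1) v0(1) c0_nonzero by auto
    have "card {u0, v0, c0} * CARD('a) + card {u0, v0} \<le> 3 * CARD('a) + 2"
      by (intro add_mono mult_right_mono card_insert_le_m1) (auto simp: card_insert_if)
    also have "\<dots> < 7 * CARD('a)" using True by simp
    also have "\<dots> \<le> CARD('a)\<^sup>2" using True by (simp add: power2_eq_square)
    finally obtain x y where "\<forall>w\<in>{u0, v0, c0}. dot3 (1, x, y) w \<noteq> 0"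
      "\<forall>z\<in>{u0, v0}. \<forall>m. z \<noteq> scale3 m (1, x, y)"
      using exists_affine_point_avoiding[OF nonzero] by blast
    then interpret brown_detour c0 a0 b0 u0 v0 x y
      using u0 v0 u v \<open>u \<noteq> v\<close> by unfold_locales auto
    have "nat (int CARD('a) - 6) = CARD('a) - 6" by arith
    then show ?thesis using many_disjoint_detours u0(2) v0(2) by simp
  qed
qed

end

theorem lemma1:
  fixes a b c :: "'a::{finite,field} vec3 set"
  assumes "odd CARD('a)"
    and "c \<in> brown_vertices" and "quadric c"
    and "brown_adj c a" and "brown_adj c b" and "a \<noteq> b"
  defines "A \<equiv> brown_nbhd a - brown_nbhd b"
    and "B \<equiv> brown_nbhd b - brown_nbhd a"
  defines "M \<equiv> {{u, v} | u v. brown_adj u v \<and> u \<in> A \<and> v \<in> B}"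
  shows "k_vertex_connected (brown_vertices - {c})
           (\<lambda>u v. brown_adj u v \<and> {u, v} \<notin> M) (nat (int CARD('a) - 6))"
proof -
  obtain c0 where c0: "c0 \<noteq> (0, 0, 0)" "c = proj_pt c0"
    using assms(2) by (rule brown_verticesE)
  have "a \<in> brown_vertices" "b \<in> brown_vertices" using assms(4,5) by (simp_all add: brown_adj_def)
  then obtain a0 b0 where a0: "a0 \<noteq> (0, 0, 0)" "a = proj_pt a0" and b0: "b0 \<noteq> (0, 0, 0)" "b = proj_pt b0"
    by (elim brown_verticesE)
  have c0_a0: "dot3 c0 a0 = 0" "proj_pt c0 \<noteq> proj_pt a0"
    using assms(4) brown_adj_proj_pt_iff[OF c0(1) a0(1)] c0(2) a0(2) by auto
  have c0_b0: "dot3 c0 b0 = 0" "proj_pt c0 \<noteq> proj_pt b0"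
    using assms(5) brown_adj_proj_pt_iff[OF c0(1) b0(1)] c0(2) b0(2) by auto
  have c0_isotropic: "dot3 c0 c0 = 0" using assms(3) c0(2) quadric_proj_pt_iff by blast
  interpret quadric_flag c0 a0 b0
  proof
    show "dot3 a0 b0 \<noteq> 0"
      using isotropic_neighbours_not_orthogonal[OF a0(1) b0(1) c0(1) c0_isotropic] c0_a0 c0_b0
        assms(6) a0(2) b0(2) by auto
  qed (use c0(1) a0(1) b0(1) c0_isotropic c0_a0 c0_b0 in auto)
  have "(\<lambda>u v. brown_adj u v \<and> {u, v} \<notin> M) = H_adj"
    by (intro ext) (simp add: H_adj_def Mset_def Aset_def Bset_def M_def A_def B_def a0(2) b0(2))
  then show ?thesis using k_vertex_connected_H_adj c0(2) by simp
qed

end
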